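(* With $w=\sqrt{(u+1)^2-4}$, $$\sum_{n\ge0}\Bigl(\sum_{\sigma\in\mathfrak S_n}u^{{\rm lrda}(\sigma)}\beta^{{\rm RLmin}(\sigma)}\Bigr)\frac{t^n}{n!}=e^{\frac{\beta(u-1)}{2}t}\left(\frac{w}{w\cosh\bigl(\frac{wt}{2}\bigr)-(1+u)\sinh\bigl(\frac{wt}{2}\bigr)}\right)^{\beta}.$$
   Context: For $\sigma=\sigma_1\cdots\sigma_n\in\mathfrak S_n$ ($\mathfrak S_0$ = empty permutation): ${\rm lrda}(\sigma)$ is the number of $i$ with $1\le i\le n$ and $\sigma_{i-1}<\sigma_i<\sigma_{i+1}$ (conventions $\sigma_0=0$, $\sigma_{n+1}=+\infty$); ${\rm RLmin}(\sigma)$ is the number of $i$ with $\sigma_j>\sigma_i$ for all $j>i$. Identity of formal power series in $t$; the bracketed base has constant term $1$ and only even powers of $w$ occur; $G^c:=\exp(c\log G)$. *)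

theory Defs
  imports Complex_Main "HOL-Computational_Algebra.Formal_Power_Series" "HOL-Combinatorics.Permutations"
begin

(* lrda: number of i in 1..n with sigma(i-1) < sigma(i) < sigma(i+1),
   with conventions sigma(0) = 0 and sigma(n+1) = +infinity *)
definition lrda :: "nat \<Rightarrow> (nat \<Rightarrow> nat) \<Rightarrow> nat" where
  "lrda n \<sigma> = card {i \<in> {1..n}.
      (if i = 1 then 0 else \<sigma> (i - 1)) < \<sigma> i \<and> (i = n \<or> \<sigma> i < \<sigma> (i + 1))}"

definition RLmin :: "nat \<Rightarrow> (nat \<Rightarrow> nat) \<Rightarrow> nat" where
  "RLmin n \<sigma> = card {i \<in> {1..n}. \<forall>j \<in> {i+1..n}. \<sigma> j > \<sigma> i}"

definition lhs_egf :: "complex \<Rightarrow> complex \<Rightarrow> complex fps" where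
  "lhs_egf u \<beta> = Abs_fps (\<lambda>n.
      (\<Sum>\<sigma> \<in> {\<sigma>. \<sigma> permutes {1..n}}. u ^ lrda n \<sigma> * \<beta> ^ RLmin n \<sigma>) / of_nat (fact n))"

(* cosh(w t/2) = sum_k w^(2k) t^(2k) / (2^(2k) (2k)!) *)
definition cosh_half :: "complex \<Rightarrow> complex fps" where
  "cosh_half w = Abs_fps (\<lambda>n. if even n then w ^ n / (2 ^ n * of_nat (fact n)) else 0)"

(* sinh(w t/2) / w = sum_k w^(2k) t^(2k+1) / (2^(2k+1) (2k+1)!)  (even in w) *)
definition sinh_half_over :: "complex \<Rightarrow> complex fps" where
  "sinh_half_over w = Abs_fps (\<lambda>n. if odd n then w ^ (n - 1) / (2 ^ n * of_nat (fact n)) else 0)"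

(* G^c := exp(c log G), for G with constant term 1 *)
definition fps_powc :: "complex fps \<Rightarrow> complex \<Rightarrow> complex fps" where
  "fps_powc G c = fps_exp 1 oo (fps_const c * (fps_ln 1 oo (G - 1)))"

end

theory Submission
  imports Defs "HOL-Combinatorics.Multiset_Permutations"
begin

unbundle fps_syntax

(*
  Cut a permutation at its least letter, \<sigma> = \<alpha> m \<gamma>. The letters of \<alpha> are never right-to-left
  minima, m is one, and m is a double ascent exactly when \<alpha> is empty. Writing A for the
  generating function of the theorem and B for the one in which right-to-left minima are not
  weighted and the last letter is never a double ascent, this gives
    A' = \<beta> (B + u - 1) A,      B' = B\<^sup>2 + (u - 1) (B - 1).
  The Riccati equation for B is linearised by B = -D'/D - (u - 1)/2, where
  D = cosh(wt/2) - (1 + u) sinh(wt/2)/w solves D'' = (w/2)\<^sup>2 D; then A and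
  e^{\<beta>(u-1)t/2} D^{-\<beta>} solve the same linear equation with the same constant term.
*)

section \<open>Statistics of words\<close>

text \<open>\<open>dasc p r xs\<close> counts the double ascents of \<open>xs\<close> when \<open>xs\<close> is preceded by the letter
  \<open>p\<close> and followed by \<open>+\<infinity>\<close> if \<open>r\<close>, by a letter smaller than all of \<open>xs\<close> otherwise.\<close>

primrec dasc :: "nat \<Rightarrow> bool \<Rightarrow> nat list \<Rightarrow> nat" where
  "dasc p r [] = 0"
| "dasc p r (x # xs) =
     (if p < x \<and> (case xs of [] \<Rightarrow> r | y # _ \<Rightarrow> x < y) then 1 else 0) + dasc x r xs"

primrec rlmin :: "nat list \<Rightarrow> nat" where
  "rlmin [] = 0"
| "rlmin (x # xs) = (if \<forall>y\<in>set xs. x < y then 1 else 0) + rlmin xs"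

lemma dasc_append_min:
  assumes "\<forall>x\<in>set xs. m < x" and "\<forall>y\<in>set ys. m < y"
  shows "dasc p r (xs @ m # ys) =
    dasc p False xs + (if xs = [] \<and> p < m \<and> (ys \<noteq> [] \<or> r) then 1 else 0) + dasc m r ys"
  using assms
proof (induction xs arbitrary: p)
  case Nil
  then show ?case by (cases ys) auto
next
  case (Cons x xs)
  then show ?case by (cases xs) auto
qed

lemma rlmin_append_min:
  "\<forall>x\<in>set xs. m < x \<Longrightarrow> \<forall>y\<in>set ys. m < y \<Longrightarrow> rlmin (xs @ m # ys) = rlmin ys + 1"
  by (induction xs) auto

lemma dasc_conv_sum:
  "dasc p r xs = (\<Sum>i<length xs.
     if (if i = 0 then p else xs ! (i - 1)) < xs ! i \<and>
        (if Suc i = length xs then r else xs ! i < xs ! Suc i) then 1 else 0)"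
proof (induction xs arbitrary: p)
  case (Cons x xs)
  show ?case
    unfolding dasc.simps Cons length_Cons sum.lessThan_Suc_shift
    by (cases xs) (auto simp: nth_Cons')
qed simp

lemma all_between_Suc_iff:
  "(\<forall>j. Suc i < j \<and> j < Suc n \<longrightarrow> P j) \<longleftrightarrow> (\<forall>j. i < j \<and> j < n \<longrightarrow> P (Suc j))"
  by (metis Suc_less_eq Suc_lessE)

lemma rlmin_conv_sum:
  "rlmin xs = (\<Sum>i<length xs. if \<forall>j. i < j \<and> j < length xs \<longrightarrow> xs ! i < xs ! j then 1 else 0)"
proof (induction xs)
  case (Cons x xs)
  show ?case
    unfolding rlmin.simps Cons length_Cons sum.lessThan_Suc_shift
    by (auto simp: all_set_conv_all_nth gr0_conv_Suc all_between_Suc_iff)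
qed simp

lemma card_atLeast1_atMost_filter:
  "card {i \<in> {1..n}. P i} = (\<Sum>k<n. if P (Suc k) then 1 else 0)"
proof -
  have "(\<Sum>i\<in>{Suc 0..n}. if P i then 1 else 0) = card {i \<in> {1..n}. P i}"
    by (simp add: sum.inter_filter[symmetric])
  then show ?thesis
    by (simp add: sum.atLeast1_atMost_eq)
qed

lemma lrda_eq_dasc: "lrda n \<sigma> = dasc 0 True (map \<sigma> [1..<Suc n])"
  unfolding lrda_def card_atLeast1_atMost_filter dasc_conv_sum
  by (intro sum.cong) (auto simp: nth_Cons' simp del: upt_Suc)

lemma ball_atLeastAtMost_Suc_iff:
  "(\<forall>j\<in>{Suc k + 1..n}. Q j) \<longleftrightarrow> (\<forall>j. k < j \<and> j < n \<longrightarrow> Q (Suc j))"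
  by (metis Suc_eq_plus1 Suc_le_D Suc_le_eq Suc_less_eq atLeastAtMost_iff)

lemma RLmin_eq_rlmin: "RLmin n \<sigma> = rlmin (map \<sigma> [1..<Suc n])"
  unfolding RLmin_def card_atLeast1_atMost_filter rlmin_conv_sum ball_atLeastAtMost_Suc_iff
  by (intro sum.cong) (auto simp del: upt_Suc)

lemma bij_betw_permutes_permutations_of_set:
  "bij_betw (\<lambda>\<sigma>. map \<sigma> [1..<Suc n]) {\<sigma>. \<sigma> permutes {1..n}} (permutations_of_set {1..n})"
proof (rule bij_betw_imageI)
  have set_upt: "set [1..<Suc n] = {1..n}"
    by auto
  show inj: "inj_on (\<lambda>\<sigma>. map \<sigma> [1..<Suc n]) {\<sigma>. \<sigma> permutes {1..n}}"
  proof (rule inj_onI)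
    fix \<sigma> \<tau> assume perm: "\<sigma> \<in> {\<sigma>. \<sigma> permutes {1..n}}" "\<tau> \<in> {\<sigma>. \<sigma> permutes {1..n}}"
      and eq: "map \<sigma> [1..<Suc n] = map \<tau> [1..<Suc n]"
    have "\<sigma> x = \<tau> x" for x
    proof (cases "x \<in> {1..n}")
      case True
      then show ?thesis
        using eq set_upt by (metis map_eq_conv)
    next
      case False
      then show ?thesis
        using perm by (simp add: permutes_not_in)
    qed
    then show "\<sigma> = \<tau>" ..
  qed
  have "(\<lambda>\<sigma>. map \<sigma> [1..<Suc n]) ` {\<sigma>. \<sigma> permutes {1..n}} \<subseteq> permutations_of_set {1..n}"
  proof clarify
    fix \<sigma> assume \<sigma>: "\<sigma> permutes {1..n}"
    show "map \<sigma> [1..<Suc n] \<in> permutations_of_set {1..n}"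
    proof
      show "set (map \<sigma> [1..<Suc n]) = {1..n}"
        using permutes_image[OF \<sigma>] set_upt by (simp only: set_map)
      show "distinct (map \<sigma> [1..<Suc n])"
        using permutes_inj_on[OF \<sigma>] set_upt by (simp add: distinct_map del: upt_Suc)
    qed
  qed
  moreover have "card ((\<lambda>\<sigma>. map \<sigma> [1..<Suc n]) ` {\<sigma>. \<sigma> permutes {1..n}}) = card (permutations_of_set {1..n})"
    using card_image[OF inj] by (simp add: card_permutations)
  ultimately show "(\<lambda>\<sigma>. map \<sigma> [1..<Suc n]) ` {\<sigma>. \<sigma> permutes {1..n}} = permutations_of_set {1..n}"
    by (simp add: card_subset_eq)
qed

section \<open>Decomposition at the least letter\<close>

definition perm_weight :: "'a::comm_semiring_1 \<Rightarrow> 'a \<Rightarrow> bool \<Rightarrow> nat list \<Rightarrow> 'a" where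
  "perm_weight u b r xs = u ^ dasc 0 r xs * b ^ rlmin xs"

text \<open>The recursion mirrors the cut \<open>xs @ m # ys\<close> at the least letter \<open>m\<close>: \<open>xs\<close> has no
  right-to-left minima and its last letter is followed by the smaller \<open>m\<close>; \<open>m\<close> is a
  double ascent iff \<open>xs = []\<close> and \<open>ys \<noteq> []\<close> or \<open>r\<close>.\<close>

fun perm_weight_sum :: "'a::comm_semiring_1 \<Rightarrow> 'a \<Rightarrow> bool \<Rightarrow> nat \<Rightarrow> 'a" where
  "perm_weight_sum u b r 0 = 1"
| "perm_weight_sum u b r (Suc n) = b * (\<Sum>j\<le>n. of_nat (n choose j) *
     perm_weight_sum u 1 False j * perm_weight_sum u b r (n - j) *
     (if j = 0 \<and> (r \<or> 0 < n) then u else 1))"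

lemma perm_weight_append_min:
  assumes "\<forall>x\<in>set xs. m < x" and "\<forall>y\<in>set ys. m < y" and "0 < m"
  shows "perm_weight u b r (xs @ m # ys) =
    b * perm_weight u 1 False xs * perm_weight u b r ys * (if xs = [] \<and> (ys \<noteq> [] \<or> r) then u else 1)"
proof -
  have "dasc m r ys = dasc 0 r ys"
    using assms(2,3) by (cases ys) auto
  then show ?thesis
    using assms unfolding perm_weight_def dasc_append_min[OF assms(1,2)] rlmin_append_min[OF assms(1,2)]
    by (auto simp: power_add mult_ac)
qed

lemma bij_betw_append_Cons_permutations_of_set:
  assumes "m \<notin> S"
  shows "bij_betw (\<lambda>(T, xs, ys). xs @ m # ys)
    (SIGMA T:Pow S. permutations_of_set T \<times> permutations_of_set (S - T))
    (permutations_of_set (insert m S))"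
proof (rule bij_betw_imageI)
  show "inj_on (\<lambda>(T, xs, ys). xs @ m # ys)
      (SIGMA T:Pow S. permutations_of_set T \<times> permutations_of_set (S - T))"
  proof (rule inj_onI, clarify)
    fix T xs ys T' xs' ys'
    assume eq: "xs @ m # ys = xs' @ m # ys'" and "T \<subseteq> S" "xs \<in> permutations_of_set T"
      "ys \<in> permutations_of_set (S - T)" "xs' \<in> permutations_of_set T'"
    then have "m \<notin> set xs" "m \<notin> set ys"
      using assms by (auto dest: permutations_of_setD)
    with eq \<open>xs \<in> permutations_of_set T\<close> \<open>xs' \<in> permutations_of_set T'\<close>
    show "T = T' \<and> (xs, ys) = (xs', ys')"
      by (metis append_Cons_eq_iff permutations_of_setD(1))
  qed
  show "(\<lambda>(T, xs, ys). xs @ m # ys) `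
      (SIGMA T:Pow S. permutations_of_set T \<times> permutations_of_set (S - T)) =
      permutations_of_set (insert m S)"
  proof
    show "(\<lambda>(T, xs, ys). xs @ m # ys) `
        (SIGMA T:Pow S. permutations_of_set T \<times> permutations_of_set (S - T)) \<subseteq>
        permutations_of_set (insert m S)"
      using assms by (auto simp: permutations_of_set_def)
  next
    show "permutations_of_set (insert m S) \<subseteq> (\<lambda>(T, xs, ys). xs @ m # ys) `
        (SIGMA T:Pow S. permutations_of_set T \<times> permutations_of_set (S - T))"
    proof
      fix zs assume zs: "zs \<in> permutations_of_set (insert m S)"
      then obtain xs ys where zs_eq: "zs = xs @ m # ys"
        by (metis insertI1 permutations_of_setD(1) split_list)
      have "(set xs, xs, ys) \<in> (SIGMA T:Pow S. permutations_of_set T \<times> permutations_of_set (S - T))"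
        using zs assms unfolding zs_eq by (auto simp: permutations_of_set_def)
      then show "zs \<in> (\<lambda>(T, xs, ys). xs @ m # ys) `
          (SIGMA T:Pow S. permutations_of_set T \<times> permutations_of_set (S - T))"
        unfolding zs_eq by (rule rev_image_eqI) simp
    qed
  qed
qed

lemma sum_perm_weight_insert_min:
  assumes "\<forall>x\<in>S. m < x" and "0 < m"
  shows "(\<Sum>zs\<in>permutations_of_set (insert m S). perm_weight u b r zs) =
    b * (\<Sum>T\<in>Pow S. (if T = {} \<and> (r \<or> S \<noteq> {}) then u else 1) *
      (\<Sum>xs\<in>permutations_of_set T. perm_weight u 1 False xs) *
      (\<Sum>ys\<in>permutations_of_set (S - T). perm_weight u b r ys))"
proof (cases "finite S")
  case True
  have m: "m \<notin> S"
    using assms(1) by blast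
  have split: "perm_weight u b r (xs @ m # ys) =
      b * (if T = {} \<and> (r \<or> S \<noteq> {}) then u else 1) * (perm_weight u 1 False xs * perm_weight u b r ys)"
    if "T \<subseteq> S" "xs \<in> permutations_of_set T" "ys \<in> permutations_of_set (S - T)" for T xs ys
  proof -
    have cond: "(xs = [] \<and> (ys \<noteq> [] \<or> r)) \<longleftrightarrow> (T = {} \<and> (r \<or> S \<noteq> {}))"
      using that by (auto dest!: permutations_of_setD(1))
    have "\<forall>x\<in>set xs. m < x" "\<forall>y\<in>set ys. m < y"
      using that assms(1) by (auto dest!: permutations_of_setD(1))
    then have "perm_weight u b r (xs @ m # ys) = b * perm_weight u 1 False xs *
        perm_weight u b r ys * (if xs = [] \<and> (ys \<noteq> [] \<or> r) then u else 1)"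
      using assms(2) by (rule perm_weight_append_min)
    then show ?thesis
      unfolding cond by (simp add: mult_ac)
  qed
  have "(\<Sum>zs\<in>permutations_of_set (insert m S). perm_weight u b r zs) =
      (\<Sum>p\<in>(SIGMA T:Pow S. permutations_of_set T \<times> permutations_of_set (S - T)).
        perm_weight u b r ((\<lambda>(T, xs, ys). xs @ m # ys) p))"
    by (rule sum.reindex_bij_betw[OF bij_betw_append_Cons_permutations_of_set[OF m], symmetric])
  also have "\<dots> = (\<Sum>T\<in>Pow S. \<Sum>(xs, ys)\<in>permutations_of_set T \<times> permutations_of_set (S - T).
        b * (if T = {} \<and> (r \<or> S \<noteq> {}) then u else 1) * (perm_weight u 1 False xs * perm_weight u b r ys))"
    using True by (subst sum.Sigma) (auto intro!: sum.cong simp: split)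
  also have "\<dots> = b * (\<Sum>T\<in>Pow S. (if T = {} \<and> (r \<or> S \<noteq> {}) then u else 1) *
      (\<Sum>xs\<in>permutations_of_set T. perm_weight u 1 False xs) *
      (\<Sum>ys\<in>permutations_of_set (S - T). perm_weight u b r ys))"
    by (simp add: sum.cartesian_product[symmetric] sum_distrib_left sum_distrib_right mult_ac)
  finally show ?thesis .
next
  case False
  then have "finite T \<Longrightarrow> infinite (S - T)" for T
    by simp
  with False show ?thesis
    by (simp add: permutations_of_set_infinite)
qed

lemma sum_Pow_card:
  fixes f :: "nat \<Rightarrow> 'a::comm_semiring_1"
  assumes "finite A"
  shows "(\<Sum>T\<in>Pow A. f (card T)) = (\<Sum>j\<le>card A. of_nat (card A choose j) * f j)"
proof -
  have "(\<Sum>T\<in>Pow A. f (card T)) = (\<Sum>j\<le>card A. \<Sum>T\<in>{T \<in> Pow A. card T = j}. f (card T))"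
    by (rule sum.group[symmetric]) (use assms in \<open>auto simp: card_mono\<close>)
  also have "\<dots> = (\<Sum>j\<le>card A. of_nat (card A choose j) * f j)"
  proof (rule sum.cong[OF refl])
    fix j
    have "(\<Sum>T\<in>{T \<in> Pow A. card T = j}. f (card T)) = (\<Sum>T\<in>{T. T \<subseteq> A \<and> card T = j}. f j)"
      by (rule sum.cong) auto
    then show "(\<Sum>T\<in>{T \<in> Pow A. card T = j}. f (card T)) = of_nat (card A choose j) * f j"
      using n_subsets[OF assms, of j] by simp
  qed
  finally show ?thesis .
qed

lemma sum_perm_weight_permutations_of_set:
  assumes "finite S" and "0 \<notin> S"
  shows "(\<Sum>xs\<in>permutations_of_set S. perm_weight u b r xs) = perm_weight_sum u b r (card S)"
  using assms
proof (induction "card S" arbitrary: S b r rule: less_induct)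
  case less
  show ?case
  proof (cases "S = {}")
    case True
    then show ?thesis
      by (simp add: perm_weight_def)
  next
    case False
    define m where "m = Min S"
    define S' where "S' = S - {m}"
    define n where "n = card S'"
    have "m \<in> S"
      using Min_in[OF less.prems(1) False] unfolding m_def .
    then have S: "S = insert m S'" and fin: "finite S'"
      using less.prems unfolding S'_def by auto
    have card: "card S = Suc n"
      unfolding n_def S'_def using less.prems(1) \<open>m \<in> S\<close> by (metis card_Suc_Diff1)
    have min: "\<forall>x\<in>S'. m < x" and "0 < m"
      using less.prems False unfolding S'_def m_def by (auto intro: le_neq_implies_less)
    have IH: "(\<Sum>xs\<in>permutations_of_set T. perm_weight u b' r' xs) = perm_weight_sum u b' r' (card T)"
      if "T \<subseteq> S'" for T b' r'
    proof (rule less.hyps)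
      show "card T < card S"
        using card_mono[OF fin that] unfolding card n_def by simp
      show "finite T" "0 \<notin> T"
        using that fin less.prems(2) unfolding S by (auto dest: finite_subset)
    qed
    have "(\<Sum>xs\<in>permutations_of_set S. perm_weight u b r xs) =
        b * (\<Sum>T\<in>Pow S'. (if card T = 0 \<and> (r \<or> 0 < n) then u else 1) *
          perm_weight_sum u 1 False (card T) * perm_weight_sum u b r (n - card T))"
      unfolding S sum_perm_weight_insert_min[OF min \<open>0 < m\<close>] n_def using fin
      by (intro arg_cong[where f = "(*) b"] sum.cong)
        (auto simp: IH card_Diff_subset card_gt_0_iff dest: finite_subset)
    also have "\<dots> = b * (\<Sum>j\<le>n. of_nat (n choose j) * ((if j = 0 \<and> (r \<or> 0 < n) then u else 1) *
        perm_weight_sum u 1 False j * perm_weight_sum u b r (n - j)))"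
      unfolding n_def by (rule arg_cong[where f = "(*) b"], rule sum_Pow_card[OF fin])
    also have "\<dots> = perm_weight_sum u b r (card S)"
      unfolding card by (simp add: sum_distrib_left mult_ac)
    finally show ?thesis .
  qed
qed

lemma perm_weight_sum_Suc:
  fixes u b :: "'a::comm_ring_1"
  shows "perm_weight_sum u b r (Suc n) = b * ((\<Sum>j\<le>n. of_nat (n choose j) *
      perm_weight_sum u 1 False j * perm_weight_sum u b r (n - j)) +
      (if r \<or> 0 < n then (u - 1) * perm_weight_sum u b r n else 0))"
proof -
  have "(\<Sum>j\<le>n. of_nat (n choose j) * perm_weight_sum u 1 False j * perm_weight_sum u b r (n - j) *
      (if j = 0 \<and> (r \<or> 0 < n) then u else 1)) =
    (\<Sum>j\<le>n. of_nat (n choose j) * perm_weight_sum u 1 False j * perm_weight_sum u b r (n - j) +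
      (if j = 0 \<and> (r \<or> 0 < n) then (u - 1) * perm_weight_sum u b r n else 0))"
    by (rule sum.cong) (auto simp: algebra_simps)
  then show ?thesis
    by (simp add: sum.distrib)
qed

section \<open>Exponential generating functions\<close>

definition egf :: "(nat \<Rightarrow> 'a::field_char_0) \<Rightarrow> 'a fps" where
  "egf a = Abs_fps (\<lambda>n. a n / fact n)"

lemma egf_nth [simp]: "egf a $ n = a n / fact n"
  by (simp add: egf_def)

lemma fps_deriv_egf: "fps_deriv (egf a) = egf (\<lambda>n. a (Suc n))"
proof (rule fps_ext)
  fix n
  have "fact (Suc n) = of_nat (Suc n) * (fact n :: 'a)"
    by simp
  then show "fps_deriv (egf a) $ n = egf (\<lambda>n. a (Suc n)) $ n"
    by (simp add: field_simps del: of_nat_Suc)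
qed

lemma egf_mult: "egf a * egf b = egf (\<lambda>n. \<Sum>j\<le>n. of_nat (n choose j) * a j * b (n - j))"
proof (rule fps_ext)
  fix n
  have "a j / fact j * (b (n - j) / fact (n - j)) = of_nat (n choose j) * a j * b (n - j) / fact n"
    if "j \<le> n" for j
    using that by (simp add: binomial_fact field_simps)
  then show "(egf a * egf b) $ n = egf (\<lambda>n. \<Sum>j\<le>n. of_nat (n choose j) * a j * b (n - j)) $ n"
    by (simp add: fps_mult_nth atLeast0AtMost sum_divide_distrib)
qed

lemma lhs_egf_eq_egf: "lhs_egf u \<beta> = egf (perm_weight_sum u \<beta> True)"
proof -
  have "(\<Sum>\<sigma>\<in>{\<sigma>. \<sigma> permutes {1..n}}. u ^ lrda n \<sigma> * \<beta> ^ RLmin n \<sigma>) =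
      perm_weight_sum u \<beta> True n" for n
  proof -
    have "(\<Sum>\<sigma>\<in>{\<sigma>. \<sigma> permutes {1..n}}. u ^ lrda n \<sigma> * \<beta> ^ RLmin n \<sigma>) =
        (\<Sum>\<sigma>\<in>{\<sigma>. \<sigma> permutes {1..n}}. perm_weight u \<beta> True (map \<sigma> [1..<Suc n]))"
      by (simp add: perm_weight_def lrda_eq_dasc RLmin_eq_rlmin)
    also have "\<dots> = (\<Sum>xs\<in>permutations_of_set {1..n}. perm_weight u \<beta> True xs)"
      by (rule sum.reindex_bij_betw[OF bij_betw_permutes_permutations_of_set])
    also have "\<dots> = perm_weight_sum u \<beta> True n"
      using sum_perm_weight_permutations_of_set[of "{1..n}"] by simp
    finally show ?thesis .
  qed
  then show ?thesis
    by (simp add: lhs_egf_def egf_def)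
qed

lemma fps_deriv_egf_perm_weight_sum_True:
  fixes u b :: "'a::field_char_0"
  shows "fps_deriv (egf (perm_weight_sum u b True)) =
    fps_const b * (egf (perm_weight_sum u 1 False) + fps_const (u - 1)) * egf (perm_weight_sum u b True)"
  by (rule fps_ext)
    (simp add: fps_deriv_egf perm_weight_sum_Suc egf_mult algebra_simps add_divide_distrib
      diff_divide_distrib del: perm_weight_sum.simps(2))

lemma fps_deriv_egf_perm_weight_sum_False:
  fixes u :: "'a::field_char_0"
  defines "B \<equiv> egf (perm_weight_sum u 1 False)"
  shows "fps_deriv B = B * B + fps_const (u - 1) * (B - 1)"
  unfolding B_def
  by (rule fps_ext)
    (simp add: fps_deriv_egf perm_weight_sum_Suc egf_mult algebra_simps add_divide_distrib
      diff_divide_distrib del: perm_weight_sum.simps(2))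

section \<open>Linear differential equations for power series\<close>

lemma fps_deriv_eq_mult_unique:
  fixes M F G :: "'a::{idom, semiring_char_0} fps"
  assumes "fps_deriv F = M * F" and "fps_deriv G = M * G" and "F $ 0 = G $ 0"
  shows "F = G"
proof -
  have "(F - G) $ n = 0" for n
  proof (induction n rule: less_induct)
    case (less n)
    show ?case
    proof (cases n)
      case 0
      then show ?thesis
        using assms(3) by simp
    next
      case (Suc m)
      have "of_nat (Suc m) * (F - G) $ Suc m = fps_deriv (F - G) $ m"
        by (simp add: right_diff_distrib)
      also have "\<dots> = (M * (F - G)) $ m"
        using assms(1,2) by (simp add: right_diff_distrib)
      also have "\<dots> = 0"
        using less Suc by (auto simp: fps_mult_nth intro: sum.neutral)
      finally show ?thesis
        using Suc by (simp del: of_nat_Suc)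
    qed
  qed
  then show ?thesis
    by (simp add: fps_eq_iff)
qed

lemma fps_deriv_cosh_half: "fps_deriv (cosh_half w) = fps_const (w\<^sup>2 / 2) * sinh_half_over w"
proof (rule fps_ext)
  fix n
  show "fps_deriv (cosh_half w) $ n = (fps_const (w\<^sup>2 / 2) * sinh_half_over w) $ n"
  proof (cases "even n")
    case True
    then show ?thesis
      by (simp add: cosh_half_def sinh_half_over_def)
  next
    case False
    then obtain k where n: "n = Suc k"
      by (cases n) auto
    have "fact (Suc n) = of_nat (Suc n) * (fact n :: complex)"
      by simp
    with False show ?thesis
      unfolding cosh_half_def sinh_half_over_def n
      by (simp add: field_simps power2_eq_square del: of_nat_Suc fact_Suc)
  qed
qed

lemma fps_deriv_sinh_half_over: "fps_deriv (sinh_half_over w) = fps_const (1 / 2) * cosh_half w"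
proof (rule fps_ext)
  fix n
  have "fact (Suc n) = of_nat (Suc n) * (fact n :: complex)"
    by simp
  then show "fps_deriv (sinh_half_over w) $ n = (fps_const (1 / 2) * cosh_half w) $ n"
    unfolding cosh_half_def sinh_half_over_def
    by (simp add: field_simps del: of_nat_Suc fact_Suc)
qed

lemma riccati_linearization:
  fixes B D :: "'a::field_char_0 fps" and k :: 'a
  assumes B: "fps_deriv B = B * B + fps_const (2 * k) * (B - 1)" "B $ 0 = 1"
    and D: "fps_deriv (fps_deriv D) = fps_const (k * k + 2 * k) * D"
      "D $ 0 = 1" "fps_deriv D $ 0 = - (1 + k)"
  shows "B * D = - (fps_deriv D + fps_const k * D)"
proof -
  define K where "K = fps_const k"
  define Y where "Y = B * D + fps_deriv D + K * D"
  have B': "fps_deriv B = B * B + (K + K) * (B - 1)"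
    using B(1) unfolding K_def by (metis fps_const_add mult_2)
  have D': "fps_deriv (fps_deriv D) = (K * K + K + K) * D"
    using D(1) unfolding K_def by (metis fps_const_add fps_const_mult mult_2 add.assoc)
  have "fps_deriv Y = fps_deriv B * D + B * fps_deriv D + fps_deriv (fps_deriv D) + K * fps_deriv D"
    unfolding Y_def K_def by (simp add: algebra_simps)
  also have "\<dots> = (B + K) * Y"
    unfolding B' D' Y_def by (simp add: algebra_simps)
  finally have "fps_deriv Y = (B + K) * Y" .
  moreover have "Y $ 0 = 0"
    unfolding Y_def K_def using B(2) D(2,3) by simp
  ultimately have "Y = 0"
    using fps_deriv_eq_mult_unique[of Y "B + K" 0] by simp
  then show ?thesis
    unfolding Y_def K_def by (simp add: algebra_simps eq_neg_iff_add_eq_0)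
qed

lemma fps_powc_nth_0 [simp]: "fps_powc G c $ 0 = 1"
  by (simp add: fps_powc_def)

lemma fps_deriv_fps_powc:
  assumes "G $ 0 = 1"
  shows "fps_deriv (fps_powc G c) * G = fps_const c * fps_deriv G * fps_powc G c"
proof -
  define H where "H = fps_const c * (fps_ln 1 oo (G - 1))"
  have G1: "(G - 1) $ 0 = 0"
    using assms by simp
  have "inverse (1 + fps_X) oo (G - 1) = inverse ((1 + fps_X) oo (G - 1))"
    using G1 by (intro fps_inverse_compose) simp_all
  also have "(1 + fps_X) oo (G - 1) = G"
    using G1 by (simp add: fps_compose_add_distrib)
  finally have "fps_deriv H = fps_const c * (inverse G * fps_deriv G)"
    unfolding H_def using G1 by (simp add: fps_compose_deriv fps_ln_deriv)
  then have "fps_deriv H * G = fps_const c * fps_deriv G"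
    using assms by (simp add: inverse_mult_eq_1' mult_ac)
  moreover have "fps_deriv (fps_powc G c) = fps_powc G c * fps_deriv H"
    unfolding fps_powc_def H_def[symmetric] by (simp add: fps_compose_deriv H_def)
  ultimately show ?thesis
    by (metis mult.assoc mult.commute)
qed

lemma fps_deriv_fps_powc_inverse:
  assumes "D $ 0 = 1"
  shows "fps_deriv (fps_powc (inverse D) c) * D = - (fps_const c * fps_deriv D * fps_powc (inverse D) c)"
proof -
  let ?P = "fps_powc (inverse D) c"
  have DG: "inverse D * D = 1"
    using assms by (simp add: inverse_mult_eq_1)
  have eq: "fps_deriv ?P * inverse D = - (fps_const c * fps_deriv D * (inverse D)\<^sup>2 * ?P)"
    using fps_deriv_fps_powc[of "inverse D" c] assms by (simp add: fps_inverse_deriv mult_ac)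
  have "fps_deriv ?P * D = fps_deriv ?P * inverse D * D * D"
    by (simp add: DG mult.assoc)
  also have "\<dots> = - (fps_const c * fps_deriv D * ?P * ((inverse D * D) * (inverse D * D)))"
    unfolding eq by (simp add: power2_eq_square mult_ac)
  also have "\<dots> = - (fps_const c * fps_deriv D * ?P)"
    unfolding DG by simp
  finally show ?thesis .
qed

definition denom_fps :: "complex \<Rightarrow> complex \<Rightarrow> complex fps" where
  "denom_fps u w = cosh_half w - fps_const (1 + u) * sinh_half_over w"

lemma denom_fps_nth_0 [simp]: "denom_fps u w $ 0 = 1"
  by (simp add: denom_fps_def cosh_half_def sinh_half_over_def)

lemma fps_deriv_denom_fps_nth_0: "fps_deriv (denom_fps u w) $ 0 = - (1 + u) / 2"
  by (simp add: denom_fps_def cosh_half_def sinh_half_over_def field_simps)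

lemma fps_deriv_fps_deriv_denom_fps:
  "fps_deriv (fps_deriv (denom_fps u w)) = fps_const (w\<^sup>2 / 4) * denom_fps u w"
  by (simp add: denom_fps_def fps_deriv_cosh_half fps_deriv_sinh_half_over algebra_simps)

lemma egf_perm_weight_sum_False_linearized:
  assumes "w\<^sup>2 = (u + 1)\<^sup>2 - 4"
  shows "(egf (perm_weight_sum u 1 False) + fps_const (u - 1)) * denom_fps u w =
    fps_const ((u - 1) / 2) * denom_fps u w - fps_deriv (denom_fps u w)"
proof -
  define k where "k = (u - 1) / 2"
  define K where "K = fps_const k"
  define D where "D = denom_fps u w"
  define B where "B = egf (perm_weight_sum u 1 False)"
  have two_k: "2 * k = u - 1"
    by (simp add: k_def)
  have "fps_deriv B = B * B + fps_const (2 * k) * (B - 1)"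
    unfolding two_k B_def by (rule fps_deriv_egf_perm_weight_sum_False)
  moreover have "fps_deriv (fps_deriv D) = fps_const (k * k + 2 * k) * D"
  proof -
    have w: "w\<^sup>2 / 4 = k * k + 2 * k"
      unfolding k_def assms by (simp add: field_simps power2_eq_square)
    show ?thesis
      unfolding D_def fps_deriv_fps_deriv_denom_fps w ..
  qed
  moreover have "fps_deriv D $ 0 = - (1 + k)"
    unfolding D_def fps_deriv_denom_fps_nth_0 k_def by (simp add: field_simps)
  ultimately have BD: "B * D = - (fps_deriv D + K * D)"
    unfolding K_def by (intro riccati_linearization) (simp_all add: B_def D_def)
  have Ku: "fps_const (u - 1) = K + K"
    unfolding K_def two_k[symmetric] by (metis fps_const_add mult_2)
  have "(B + fps_const (u - 1)) * D = B * D + fps_const (u - 1) * D"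
    by (simp add: algebra_simps)
  also have "\<dots> = K * D - fps_deriv D"
    unfolding BD Ku by (simp add: algebra_simps)
  finally show ?thesis
    unfolding B_def D_def K_def k_def .
qed

lemma fps_deriv_fps_exp_mult_fps_powc_inverse:
  assumes "D $ 0 = 1"
  shows "fps_deriv (fps_exp (c * k) * fps_powc (inverse D) c) * D =
    fps_const c * (fps_const k * D - fps_deriv D) * (fps_exp (c * k) * fps_powc (inverse D) c)"
proof -
  let ?E = "fps_exp (c * k)" and ?P = "fps_powc (inverse D) c"
  have "fps_deriv (?E * ?P) * D = fps_const (c * k) * ?E * ?P * D + ?E * (fps_deriv ?P * D)"
    by (simp add: algebra_simps)
  also have "\<dots> = fps_const c * (fps_const k * D - fps_deriv D) * (?E * ?P)"
    unfolding fps_deriv_fps_powc_inverse[OF assms] by (simp add: algebra_simps)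
  finally show ?thesis .
qed

theorem theorem4p3:
  fixes u \<beta> w :: complex
  assumes "w ^ 2 = (u + 1) ^ 2 - 4"
  shows "lhs_egf u \<beta> =
    fps_exp (\<beta> * (u - 1) / 2) *
    fps_powc (inverse (cosh_half w - fps_const (1 + u) * sinh_half_over w)) \<beta>"
proof -
  define D where "D = denom_fps u w"
  define M where "M = fps_const \<beta> * (egf (perm_weight_sum u 1 False) + fps_const (u - 1))"
  define R where "R = fps_exp (\<beta> * ((u - 1) / 2)) * fps_powc (inverse D) \<beta>"
  have D0: "D $ 0 = 1"
    by (simp add: D_def)
  have MD: "M * D = fps_const \<beta> * (fps_const ((u - 1) / 2) * D - fps_deriv D)"
    unfolding M_def D_def mult.assoc egf_perm_weight_sum_False_linearized[OF assms] ..
  have "fps_deriv R * D = M * R * D"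
    unfolding R_def fps_deriv_fps_exp_mult_fps_powc_inverse[OF D0] MD[symmetric]
    by (simp only: mult_ac)
  moreover have "D \<noteq> 0"
    using D0 by auto
  ultimately have R: "fps_deriv R = M * R"
    by simp
  have A: "fps_deriv (egf (perm_weight_sum u \<beta> True)) = M * egf (perm_weight_sum u \<beta> True)"
    unfolding M_def by (rule fps_deriv_egf_perm_weight_sum_True)
  have "egf (perm_weight_sum u \<beta> True) = R"
    by (rule fps_deriv_eq_mult_unique[OF A R]) (simp add: R_def)
  then show ?thesis
    unfolding lhs_egf_eq_egf R_def D_def denom_fps_def by (simp add: mult.assoc)
qed

end
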